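(* If $X,Y$ are metric spaces with $|X|,|Y|\le2$, then $d_{\mathrm{GH}}(X,Y)=\widehat{d}_{\mathrm{GH}}(X,Y)$.
   Context: For $f:X\to Y$, $\operatorname{dis}(f)=\sup_{x,x'}|d_X(x,x')-d_Y(f(x),f(x'))|$; $\operatorname{codis}(f,g)=\sup_{x,y}|d_X(x,g(y))-d_Y(f(x),y)|$. $d_{\mathrm{GH}}$ is the Gromov--Hausdorff distance, equal to $\frac12\inf_{f,g}\max\{\operatorname{dis}(f),\operatorname{dis}(g),\operatorname{codis}(f,g)\}$; $\widehat{d}_{\mathrm{GH}}(X,Y)=\frac12\max\{\inf_{f:X\to Y}\operatorname{dis}(f),\inf_{g:Y\to X}\operatorname{dis}(g)\}$. *)

theory Defs
  imports "HOL-Analysis.Analysis" "HOL-Library.FuncSet"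
begin

definition metric_on :: "'a set \<Rightarrow> ('a \<Rightarrow> 'a \<Rightarrow> real) \<Rightarrow> bool" where
  "metric_on X d \<longleftrightarrow>
     (\<forall>x\<in>X. \<forall>y\<in>X. 0 \<le> d x y) \<and>
     (\<forall>x\<in>X. \<forall>y\<in>X. d x y = 0 \<longleftrightarrow> x = y) \<and>
     (\<forall>x\<in>X. \<forall>y\<in>X. d x y = d y x) \<and>
     (\<forall>x\<in>X. \<forall>y\<in>X. \<forall>z\<in>X. d x z \<le> d x y + d y z)"

definition dis :: "'a set \<Rightarrow> ('a \<Rightarrow> 'a \<Rightarrow> real) \<Rightarrow> ('b \<Rightarrow> 'b \<Rightarrow> real) \<Rightarrow> ('a \<Rightarrow> 'b) \<Rightarrow> real" where
  "dis X dX dY f = (SUP p\<in>X \<times> X. \<bar>dX (fst p) (snd p) - dY (f (fst p)) (f (snd p))\<bar>)"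

definition codis :: "'a set \<Rightarrow> ('a \<Rightarrow> 'a \<Rightarrow> real) \<Rightarrow> 'b set \<Rightarrow> ('b \<Rightarrow> 'b \<Rightarrow> real)
    \<Rightarrow> ('a \<Rightarrow> 'b) \<Rightarrow> ('b \<Rightarrow> 'a) \<Rightarrow> real" where
  "codis X dX Y dY f g = (SUP p\<in>X \<times> Y. \<bar>dX (fst p) (g (snd p)) - dY (f (fst p)) (snd p)\<bar>)"

definition dGH :: "'a set \<Rightarrow> ('a \<Rightarrow> 'a \<Rightarrow> real) \<Rightarrow> 'b set \<Rightarrow> ('b \<Rightarrow> 'b \<Rightarrow> real) \<Rightarrow> real" where
  "dGH X dX Y dY = (1/2) *
     (INF fg\<in>(X \<rightarrow>\<^sub>E Y) \<times> (Y \<rightarrow>\<^sub>E X).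
        max (dis X dX dY (fst fg)) (max (dis Y dY dX (snd fg)) (codis X dX Y dY (fst fg) (snd fg))))"

definition dGH_hat :: "'a set \<Rightarrow> ('a \<Rightarrow> 'a \<Rightarrow> real) \<Rightarrow> 'b set \<Rightarrow> ('b \<Rightarrow> 'b \<Rightarrow> real) \<Rightarrow> real" where
  "dGH_hat X dX Y dY = (1/2) *
     max (INF f\<in>(X \<rightarrow>\<^sub>E Y). dis X dX dY f) (INF g\<in>(Y \<rightarrow>\<^sub>E X). dis Y dY dX g)"

end

theory Submission
  imports Defs
begin

text \<open>
  A space with at most two points is determined up to isometry by one number, the distance
  a resp. b between its points (0 if it is a single point). Mapping x1, x2 to y1, y2 and back
  gives a pair with distortions and codistortion at most |a - b|, so
  dGH \<le> |a - b|/2. Conversely, any map X \<rightarrow> Y either collapses X, with distortion at least a,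
  or is injective, with distortion at least |a - b|; likewise for maps Y \<rightarrow> X with b for a.
  Hence the larger of the two infima is at least |a - b|, i.e. dGH_hat \<ge> |a - b|/2, and
  dGH_hat \<le> dGH holds for all finite spaces.
\<close>

lemma dis_leI:
  assumes "X \<noteq> {}" "\<And>p q. p \<in> X \<Longrightarrow> q \<in> X \<Longrightarrow> \<bar>dX p q - dY (f p) (f q)\<bar> \<le> c"
  shows "dis X dX dY f \<le> c"
  unfolding dis_def using assms by (intro cSUP_least) auto

lemma dis_ge:
  assumes "finite X" "p \<in> X" "q \<in> X"
  shows "\<bar>dX p q - dY (f p) (f q)\<bar> \<le> dis X dX dY f"
proof -
  have "bdd_above ((\<lambda>p. \<bar>dX (fst p) (snd p) - dY (f (fst p)) (f (snd p))\<bar>) ` (X \<times> X))"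
    using assms by (intro bdd_above_finite) auto
  then show ?thesis
    unfolding dis_def using assms by (auto intro: cSUP_upper2[where x = "(p, q)"])
qed

lemma codis_leI:
  assumes "X \<noteq> {}" "Y \<noteq> {}"
    and "\<And>p q. p \<in> X \<Longrightarrow> q \<in> Y \<Longrightarrow> \<bar>dX p (g q) - dY (f p) q\<bar> \<le> c"
  shows "codis X dX Y dY f g \<le> c"
  unfolding codis_def using assms by (intro cSUP_least) auto

lemma dGH_le:
  assumes "finite X" "finite Y" "f \<in> X \<rightarrow>\<^sub>E Y" "g \<in> Y \<rightarrow>\<^sub>E X"
  shows "dGH X dX Y dY
    \<le> max (dis X dX dY f) (max (dis Y dY dX g) (codis X dX Y dY f g)) / 2"
proof -
  let ?h = "\<lambda>fg. max (dis X dX dY (fst fg))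
    (max (dis Y dY dX (snd fg)) (codis X dX Y dY (fst fg) (snd fg)))"
  have "finite ((X \<rightarrow>\<^sub>E Y) \<times> (Y \<rightarrow>\<^sub>E X))"
    using assms by (simp add: finite_PiE)
  then have "(INF fg\<in>(X \<rightarrow>\<^sub>E Y) \<times> (Y \<rightarrow>\<^sub>E X). ?h fg) \<le> ?h (f, g)"
    using assms by (intro cINF_lower bdd_below_finite) auto
  then show ?thesis
    unfolding dGH_def by simp
qed

lemma dGH_hat_le_dGH:
  assumes "finite X" "finite Y" "X \<noteq> {}" "Y \<noteq> {}"
  shows "dGH_hat X dX Y dY \<le> dGH X dX Y dY"
proof -
  let ?F = "X \<rightarrow>\<^sub>E Y" and ?G = "Y \<rightarrow>\<^sub>E X"
  have fin: "finite ?F" "finite ?G"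
    using assms by (simp_all add: finite_PiE)
  have "max (INF f\<in>?F. dis X dX dY f) (INF g\<in>?G. dis Y dY dX g)
    \<le> max (dis X dX dY f) (max (dis Y dY dX g) (codis X dX Y dY f g))"
    if "f \<in> ?F" "g \<in> ?G" for f g
  proof -
    have "(INF f\<in>?F. dis X dX dY f) \<le> dis X dX dY f"
      using that fin by (intro cINF_lower bdd_below_finite) auto
    moreover have "(INF g\<in>?G. dis Y dY dX g) \<le> dis Y dY dX g"
      using that fin by (intro cINF_lower bdd_below_finite) auto
    ultimately show ?thesis
      by linarith
  qed
  moreover have "?F \<times> ?G \<noteq> {}"
    using assms by (simp add: PiE_eq_empty_iff)
  ultimately show ?thesis
    unfolding dGH_def dGH_hat_def by (intro mult_left_mono cINF_greatest) auto
qed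

lemma card_le_2_obtains_pair:
  assumes "finite X" "X \<noteq> {}" "card X \<le> 2"
  obtains a b where "X = {a, b}"
proof -
  have "card X = 1 \<or> card X = 2"
    using assms by (metis One_nat_def card_gt_0_iff le_Suc_eq le_zero_eq not_gr0 numeral_2_eq_2)
  then show ?thesis
    by (metis card_1_singletonE card_2_iff insert_absorb2 that)
qed

lemma two_point_dist:
  assumes "metric_on X d" "X = {x1, x2}" "p \<in> X" "q \<in> X"
  shows "d p q = (if p = q then 0 else d x1 x2)"
  using assms unfolding metric_on_def by (metis insert_iff singletonD)

lemma dGH_two_point_le:
  assumes mX: "metric_on X dX" and mY: "metric_on Y dY"
    and X: "X = {x1, x2}" and Y: "Y = {y1, y2}"
  shows "dGH X dX Y dY \<le> \<bar>dX x1 x2 - dY y1 y2\<bar> / 2"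
proof -
  define a b where "a = dX x1 x2" and "b = dY y1 y2"
  define f where "f = restrict (\<lambda>x. if x = x1 then y1 else y2) X"
  define g where "g = restrict (\<lambda>y. if y = y1 then x1 else x2) Y"
  have dX: "\<And>p q. p \<in> X \<Longrightarrow> q \<in> X \<Longrightarrow> dX p q = (if p = q then 0 else a)"
    using two_point_dist[OF mX X] a_def by simp
  have dY: "\<And>p q. p \<in> Y \<Longrightarrow> q \<in> Y \<Longrightarrow> dY p q = (if p = q then 0 else b)"
    using two_point_dist[OF mY Y] b_def by simp
  have a0: "x1 = x2 \<Longrightarrow> a = 0" and b0: "y1 = y2 \<Longrightarrow> b = 0"
    using dX[of x1 x1] dY[of y1 y1] X Y a_def b_def by auto
  have "dis X dX dY f \<le> \<bar>a - b\<bar>"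
    using X Y a0 b0 by (intro dis_leI) (auto simp: f_def dX dY)
  moreover have "dis Y dY dX g \<le> \<bar>a - b\<bar>"
    using X Y a0 b0 by (intro dis_leI) (auto simp: g_def dX dY abs_minus_commute)
  moreover have "codis X dX Y dY f g \<le> \<bar>a - b\<bar>"
    using X Y a0 b0 by (intro codis_leI) (auto simp: f_def g_def dX dY)
  moreover have "f \<in> X \<rightarrow>\<^sub>E Y" "g \<in> Y \<rightarrow>\<^sub>E X"
    using X Y by (auto simp: f_def g_def)
  ultimately show ?thesis
    using dGH_le[of X Y f g dX dY] X Y a_def b_def by simp
qed

lemma dis_two_point_ge:
  assumes mX: "metric_on X dX" and mY: "metric_on Y dY"
    and X: "X = {x1, x2}" and Y: "Y = {y1, y2}" and f: "f \<in> X \<rightarrow>\<^sub>E Y"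
  shows "min (dX x1 x2) \<bar>dX x1 x2 - dY y1 y2\<bar> \<le> dis X dX dY f"
proof -
  have "f x1 \<in> Y" "f x2 \<in> Y"
    using f X by auto
  then have "dY (f x1) (f x2) = 0 \<or> dY (f x1) (f x2) = dY y1 y2"
    using two_point_dist[OF mY Y] by presburger
  moreover have "\<bar>dX x1 x2 - dY (f x1) (f x2)\<bar> \<le> dis X dX dY f"
    using X by (intro dis_ge) auto
  ultimately show ?thesis
    by linarith
qed

lemma dGH_hat_two_point_ge:
  assumes mX: "metric_on X dX" and mY: "metric_on Y dY"
    and X: "X = {x1, x2}" and Y: "Y = {y1, y2}"
  shows "\<bar>dX x1 x2 - dY y1 y2\<bar> / 2 \<le> dGH_hat X dX Y dY"
proof -
  have "min (dX x1 x2) \<bar>dX x1 x2 - dY y1 y2\<bar> \<le> (INF f\<in>X \<rightarrow>\<^sub>E Y. dis X dX dY f)"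
    using dis_two_point_ge[OF assms] Y by (intro cINF_greatest) (simp_all add: PiE_eq_empty_iff)
  moreover have "min (dY y1 y2) \<bar>dX x1 x2 - dY y1 y2\<bar> \<le> (INF g\<in>Y \<rightarrow>\<^sub>E X. dis Y dY dX g)"
    using dis_two_point_ge[OF mY mX Y X] X
    by (intro cINF_greatest) (simp_all add: PiE_eq_empty_iff abs_minus_commute)
  moreover have "0 \<le> dX x1 x2" "0 \<le> dY y1 y2"
    using mX mY X Y unfolding metric_on_def by (meson insertI1 insert_subset subset_insertI)+
  ultimately show ?thesis
    unfolding dGH_hat_def by argo
qed

theorem claim4:
  fixes X :: "'a set" and dX :: "'a \<Rightarrow> 'a \<Rightarrow> real"
    and Y :: "'b set" and dY :: "'b \<Rightarrow> 'b \<Rightarrow> real"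
  assumes "metric_on X dX" and "metric_on Y dY"
    and "X \<noteq> {}" and "Y \<noteq> {}"
    and "finite X" and "card X \<le> 2"
    and "finite Y" and "card Y \<le> 2"
  shows "dGH X dX Y dY = dGH_hat X dX Y dY"
proof -
  obtain x1 x2 where X: "X = {x1, x2}"
    using card_le_2_obtains_pair assms(3,5,6) by metis
  obtain y1 y2 where Y: "Y = {y1, y2}"
    using card_le_2_obtains_pair assms(4,7,8) by metis
  have "dGH X dX Y dY \<le> \<bar>dX x1 x2 - dY y1 y2\<bar> / 2"
    using dGH_two_point_le[OF assms(1,2) X Y] .
  also have "\<dots> \<le> dGH_hat X dX Y dY"
    using dGH_hat_two_point_ge[OF assms(1,2) X Y] .
  finally show ?thesis
    using dGH_hat_le_dGH[OF assms(5,7,3,4), of dX dY] by (rule antisym)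
qed

end
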